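(* Suppose $h=h^{(0)}::h^{(1)}$ is the concatenation of two constant $\ell$-bit streams and $x$ is a uniformly distributed $\ell$-bit stream. Then (a) $G(h\vdash x\boxplus h)_\ell=2^{|\kappa h|-\ell}$; (b) $G(x,h\vdash x\boxplus h)=G(x^{\circledast\kappa h},h\vdash x\boxplus h)$.
   Context: For $x\in\mathbb{Z}_2^\ell$ and $h=h^{(0)}::h^{(1)}$ with $h^{(0)},h^{(1)}\in\mathbb{Z}_2^\ell$, $(x\boxplus h)_i=h^{(x_i)}_i$. The kernel is $\kappa h=\{i\mid h^{(0)}_i=h^{(1)}_i\}$. For $I\subseteq\{0,\dots,\ell-1\}$, $x^{\circledast I}$ is the string obtained from $x$ by replacing each bit $x_i$, $i\in I$, by a wildcard symbol $\circledast$. $G(\Xi\vdash\Theta)$ is the guessing chance: the maximal (over randomized guessing functions) fraction of random choices of the random values (here $x$) for which the function outputs $\Theta$ on input $\Xi$, as a sequence in $\ell$ considered up to negligible difference. *)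

theory Defs
  imports "HOL-Probability.Probability"
begin

definition bitstrings :: "nat \<Rightarrow> bool list set" where
  "bitstrings l = {xs. length xs = l}"

text \<open>h = h0 :: h1 is represented as the pair (h0, h1).\<close>

definition boxplus :: "bool list \<Rightarrow> bool list \<times> bool list \<Rightarrow> bool list" where
  "boxplus x h = map (\<lambda>i. if x ! i then snd h ! i else fst h ! i) [0..<length x]"

definition kernel :: "bool list \<times> bool list \<Rightarrow> nat set" where
  "kernel h = {i. i < length (fst h) \<and> fst h ! i = snd h ! i}"

text \<open>Wildcard substitution: None is the wildcard symbol, Some b a revealed bit.\<close>

definition wildcard :: "bool list \<Rightarrow> nat set \<Rightarrow> bool option list" where
  "wildcard x I = map (\<lambda>i. if i \<in> I then None else Some (x ! i)) [0..<length x]"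

text \<open>Guessing chance, as a sequence in l: x is uniform over l-bit strings; Xi l x is the
  input and Theta l x the value to be guessed; the supremum ranges over randomized guessing
  functions (input to a distribution over outputs); the success probability is taken over
  x and the internal randomness of the guesser.\<close>

definition guess_chance ::
  "(nat \<Rightarrow> bool list \<Rightarrow> 'i) \<Rightarrow> (nat \<Rightarrow> bool list \<Rightarrow> 'o) \<Rightarrow> nat \<Rightarrow> real" where
  "guess_chance Xi Theta l =
     (SUP f :: 'i \<Rightarrow> 'o pmf.
        measure_pmf.expectation (pmf_of_set (bitstrings l)) (\<lambda>x. pmf (f (Xi l x)) (Theta l x)))"

definition negligible :: "(nat \<Rightarrow> real) \<Rightarrow> bool" where
  "negligible e \<longleftrightarrow> (\<forall>c::nat. (\<lambda>n. real n ^ c * \<bar>e n\<bar>) \<longlonglongrightarrow> 0)"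

definition neg_eq :: "(nat \<Rightarrow> real) \<Rightarrow> (nat \<Rightarrow> real) \<Rightarrow> bool" where
  "neg_eq a b \<longleftrightarrow> negligible (\<lambda>n. a n - b n)"

end

theory Submission
  imports Defs
begin

text \<open>Outside the kernel of \<open>h\<close> the output \<open>x \<boxplus> h\<close> reveals the bit \<open>x\<^sub>i\<close>, while inside the
  kernel it is the same for both values of \<open>x\<^sub>i\<close>.  So \<open>x \<mapsto> x \<boxplus> h\<close> is \<open>2\<^bsup>|\<kappa> h|\<^esup>\<close>-to-one on
  \<open>\<ell>\<close>-bit strings; a guesser that sees only \<open>h\<close> succeeds with probability at most
  \<open>2\<^bsup>|\<kappa> h|\<^esup>/2\<^sup>\<ell>\<close>, attained by always guessing one fixed output.  A guesser that also sees \<open>x\<close>,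
  or only the bits of \<open>x\<close> outside \<open>\<kappa> h\<close>, can compute \<open>x \<boxplus> h\<close> and succeeds with probability 1.\<close>

lemma bitstrings_eq_lists: "bitstrings l = {xs. set xs \<subseteq> (UNIV :: bool set) \<and> length xs = l}"
  by (simp add: bitstrings_def)

lemma finite_bitstrings: "finite (bitstrings l)"
  unfolding bitstrings_eq_lists by (rule finite_lists_length_eq) simp

lemma card_bitstrings: "card (bitstrings l) = 2 ^ l"
  unfolding bitstrings_eq_lists by (subst card_lists_length_eq) simp_all

lemma bitstrings_nonempty: "bitstrings l \<noteq> {}"
  using card_bitstrings[of l] by auto

lemma expectation_uniform_bitstrings:
  "measure_pmf.expectation (pmf_of_set (bitstrings l)) f = (\<Sum>x\<in>bitstrings l. f x) / (2 :: real) ^ l"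
  by (simp add: integral_pmf_of_set finite_bitstrings bitstrings_nonempty card_bitstrings)

lemma sum_comp_const_fibres:
  fixes F :: "'b \<Rightarrow> 'c :: comm_semiring_1"
  assumes "finite A" and "\<And>y. y \<in> g ` A \<Longrightarrow> card {x \<in> A. g x = y} = k"
  shows "(\<Sum>x\<in>A. F (g x)) = of_nat k * (\<Sum>y\<in>g ` A. F y)"
proof -
  have "(\<Sum>x\<in>A. F (g x)) = (\<Sum>y\<in>g ` A. \<Sum>x\<in>{x \<in> A. g x = y}. F (g x))"
    by (rule sum.image_gen[OF assms(1)])
  also have "\<dots> = (\<Sum>y\<in>g ` A. of_nat k * F y)"
    using assms(2) by (intro sum.cong) simp_all
  finally show ?thesis
    by (simp add: sum_distrib_left)
qed

text \<open>The set of strings agreeing with \<open>c\<close> outside \<open>K\<close> is in bijection with the free choices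
  \<open>K \<rightarrow>\<^sub>E UNIV\<close> of the bits inside \<open>K\<close>.\<close>

lemma card_bitstrings_agreeing_outside:
  assumes "K \<subseteq> {..<l}"
  shows "card {x \<in> bitstrings l. \<forall>i<l. i \<notin> K \<longrightarrow> x ! i = c ! i} = 2 ^ card K"
proof -
  let ?S = "{x \<in> bitstrings l. \<forall>i<l. i \<notin> K \<longrightarrow> x ! i = c ! i}"
  have "finite K"
    using assms finite_subset by blast
  have "bij_betw (\<lambda>x. restrict (\<lambda>i. x ! i) K) ?S (K \<rightarrow>\<^sub>E (UNIV :: bool set))"
  proof (rule bij_betwI[where g = "\<lambda>y. map (\<lambda>i. if i \<in> K then y i else c ! i) [0..<l]"])
    show "map (\<lambda>i. if i \<in> K then restrict (\<lambda>i. x ! i) K i else c ! i) [0..<l] = x"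
      if "x \<in> ?S" for x
      using that by (auto simp: bitstrings_def list_eq_iff_nth_eq)
    show "restrict (\<lambda>i. map (\<lambda>i. if i \<in> K then y i else c ! i) [0..<l] ! i) K = y"
      if "y \<in> K \<rightarrow>\<^sub>E UNIV" for y
      using that assms by (force simp: PiE_def extensional_def restrict_def)
  qed (auto simp: bitstrings_def)
  then have "card ?S = card (K \<rightarrow>\<^sub>E (UNIV :: bool set))"
    by (rule bij_betw_same_card)
  also have "\<dots> = 2 ^ card K"
    using \<open>finite K\<close> by (simp add: card_PiE)
  finally show ?thesis .
qed

lemma boxplus_eq_iff_agree_outside_kernel:
  assumes "length x = l" "length y = l" "length (fst h) = l" "length (snd h) = l"
  shows "boxplus x h = boxplus y h \<longleftrightarrow> (\<forall>i<l. i \<notin> kernel h \<longrightarrow> x ! i = y ! i)"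
proof -
  have "boxplus x h = boxplus y h \<longleftrightarrow>
      (\<forall>i<l. (if x ! i then snd h ! i else fst h ! i) = (if y ! i then snd h ! i else fst h ! i))"
    using assms by (auto simp: boxplus_def list_eq_iff_nth_eq)
  also have "\<dots> \<longleftrightarrow> (\<forall>i<l. i \<notin> kernel h \<longrightarrow> x ! i = y ! i)"
    using assms by (auto simp: kernel_def)
  finally show ?thesis .
qed

lemma card_boxplus_fibre:
  assumes "y \<in> bitstrings l" "length (fst h) = l" "length (snd h) = l"
  shows "card {x \<in> bitstrings l. boxplus x h = boxplus y h} = 2 ^ card (kernel h)"
proof -
  have "{x \<in> bitstrings l. boxplus x h = boxplus y h}
      = {x \<in> bitstrings l. \<forall>i<l. i \<notin> kernel h \<longrightarrow> x ! i = y ! i}"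
    using assms boxplus_eq_iff_agree_outside_kernel[of _ l y h] by (auto simp: bitstrings_def)
  moreover have "kernel h \<subseteq> {..<l}"
    using assms(2) by (auto simp: kernel_def)
  ultimately show ?thesis
    by (simp add: card_bitstrings_agreeing_outside)
qed

text \<open>Filling every wildcard with \<open>False\<close> is harmless: wildcards sit in the kernel, where both
  halves of \<open>h\<close> agree.\<close>

lemma boxplus_fill_wildcard_kernel:
  "boxplus (map (\<lambda>b. b = Some True) (wildcard x (kernel h))) h = boxplus x h"
  by (auto simp: boxplus_def wildcard_def kernel_def)

lemma expected_success_le_1:
  "measure_pmf.expectation (pmf_of_set (bitstrings l)) (\<lambda>x. pmf (f x) (g x)) \<le> 1"
proof -
  have "(\<Sum>x\<in>bitstrings l. pmf (f x) (g x)) \<le> (\<Sum>x\<in>bitstrings l. 1)"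
    by (rule sum_mono) (rule pmf_le_1)
  then show ?thesis
    by (simp add: expectation_uniform_bitstrings card_bitstrings)
qed

lemma guess_chance_eq_1:
  assumes "\<And>x. x \<in> bitstrings l \<Longrightarrow> d (Xi l x) = Theta l x"
  shows "guess_chance Xi Theta l = 1"
  unfolding guess_chance_def
proof (rule cSup_eq_maximum)
  have "measure_pmf.expectation (pmf_of_set (bitstrings l))
      (\<lambda>x. pmf (return_pmf (d (Xi l x))) (Theta l x)) = 1"
    using assms by (simp add: expectation_uniform_bitstrings card_bitstrings)
  then show "1 \<in> range (\<lambda>f. measure_pmf.expectation (pmf_of_set (bitstrings l))
      (\<lambda>x. pmf (f (Xi l x)) (Theta l x)))"
    by (intro range_eqI[where x = "\<lambda>i. return_pmf (d i)"]) simp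
  show "z \<le> 1" if "z \<in> range (\<lambda>f. measure_pmf.expectation (pmf_of_set (bitstrings l))
      (\<lambda>x. pmf (f (Xi l x)) (Theta l x)))" for z
  proof -
    from that obtain f where "z = measure_pmf.expectation (pmf_of_set (bitstrings l))
        (\<lambda>x. pmf (f (Xi l x)) (Theta l x))"
      by blast
    with expected_success_le_1 show ?thesis
      by simp
  qed
qed

lemma guess_chance_const_input:
  assumes "\<And>y. y \<in> bitstrings l \<Longrightarrow> card {x \<in> bitstrings l. Theta l x = Theta l y} = k"
  shows "guess_chance (\<lambda>l x. c l) Theta l = k / 2 ^ l"
  unfolding guess_chance_def
proof (rule cSup_eq_maximum)
  let ?B = "bitstrings l"
  have success: "measure_pmf.expectation (pmf_of_set ?B) (\<lambda>x. pmf p (Theta l x))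
      = k * measure_pmf.prob p (Theta l ` ?B) / 2 ^ l" for p
  proof -
    have "(\<Sum>x\<in>?B. pmf p (Theta l x)) = k * (\<Sum>y\<in>Theta l ` ?B. pmf p y)"
      using assms by (intro sum_comp_const_fibres finite_bitstrings) auto
    then show ?thesis
      by (simp add: expectation_uniform_bitstrings measure_measure_pmf_finite finite_bitstrings)
  qed
  obtain y where "y \<in> ?B"
    using bitstrings_nonempty by blast
  then have "measure_pmf.prob (return_pmf (Theta l y)) (Theta l ` ?B) = 1"
    by (simp add: measure_return)
  with success[of "return_pmf (Theta l y)"]
  show "k / 2 ^ l \<in> range (\<lambda>f. measure_pmf.expectation (pmf_of_set ?B) (\<lambda>x. pmf (f (c l)) (Theta l x)))"
    by (intro range_eqI[where x = "\<lambda>_. return_pmf (Theta l y)"]) simp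
  show "z \<le> k / 2 ^ l"
    if "z \<in> range (\<lambda>f. measure_pmf.expectation (pmf_of_set ?B) (\<lambda>x. pmf (f (c l)) (Theta l x)))" for z
  proof -
    from that obtain f where "z = measure_pmf.expectation (pmf_of_set ?B) (\<lambda>x. pmf (f (c l)) (Theta l x))"
      by blast
    then have "z = k * measure_pmf.prob (f (c l)) (Theta l ` ?B) / 2 ^ l"
      by (simp add: success)
    also have "\<dots> \<le> k / 2 ^ l"
      by (intro divide_right_mono mult_left_le) simp_all
    finally show ?thesis .
  qed
qed

theorem proposition5p6:
  fixes h :: "nat \<Rightarrow> bool list \<times> bool list"
  assumes "\<And>l. length (fst (h l)) = l \<and> length (snd (h l)) = l"
  shows "(\<forall>l. guess_chance (\<lambda>l x. h l) (\<lambda>l x. boxplus x (h l)) l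
               = 2 powr (real (card (kernel (h l))) - real l))
       \<and> neg_eq (guess_chance (\<lambda>l x. (x, h l)) (\<lambda>l x. boxplus x (h l)))
                (guess_chance (\<lambda>l x. (wildcard x (kernel (h l)), h l)) (\<lambda>l x. boxplus x (h l)))"
proof
  show "\<forall>l. guess_chance (\<lambda>l x. h l) (\<lambda>l x. boxplus x (h l)) l
      = 2 powr (real (card (kernel (h l))) - real l)"
  proof
    fix l
    have "guess_chance (\<lambda>l x. h l) (\<lambda>l x. boxplus x (h l)) l
        = real (2 ^ card (kernel (h l))) / 2 ^ l"
      using assms by (intro guess_chance_const_input card_boxplus_fibre) simp_all
    then show "guess_chance (\<lambda>l x. h l) (\<lambda>l x. boxplus x (h l)) l
        = 2 powr (real (card (kernel (h l))) - real l)"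
      by (simp add: powr_diff powr_realpow)
  qed
  have "guess_chance (\<lambda>l x. (x, h l)) (\<lambda>l x. boxplus x (h l)) l = 1" for l
    by (rule guess_chance_eq_1[where d = "\<lambda>(x, h). boxplus x h"]) simp
  moreover have "guess_chance (\<lambda>l x. (wildcard x (kernel (h l)), h l)) (\<lambda>l x. boxplus x (h l)) l = 1" for l
    by (rule guess_chance_eq_1[where d = "\<lambda>(w, h). boxplus (map (\<lambda>b. b = Some True) w) h"])
      (simp add: boxplus_fill_wildcard_kernel)
  ultimately show "neg_eq (guess_chance (\<lambda>l x. (x, h l)) (\<lambda>l x. boxplus x (h l)))
      (guess_chance (\<lambda>l x. (wildcard x (kernel (h l)), h l)) (\<lambda>l x. boxplus x (h l)))"
    by (simp add: neg_eq_def negligible_def)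
qed

end
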